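(* Let $n$ be a positive integer. Every $\alpha \in \mathcal{M}_n$ can be realized as $\alpha=\mu_n(\xi,\xi')$ for some reals $\xi\neq\xi'$ for which the supremum defining $\mu_n(\xi,\xi')$ is attained at some $(s,t) \in \mathbb{Z}^2 \setminus \{0\}$.
   Context: For reals $\xi\ne\xi'$ and a positive integer $n$, $\mu_n(\xi,\xi') = \sup_{(s,t)\in\mathbb{Z}^2\setminus\{0\}} \dfrac{\gcd(t,n)\,|\xi-\xi'|}{|s-t\xi|\,|s-t\xi'|} \in\mathbb{R}\cup\{\infty\}$ (with $\gcd(0,n)=n$), and $\mathcal{M}_n$ is the set of finite values of $\mu_n(\xi,\xi')$ over pairs of reals $\xi\neq\xi'$. *)

theory Defs
  imports "HOL-Analysis.Analysis" "HOL-Library.Extended_Real"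
begin

definition mu_term :: "nat \<Rightarrow> real \<Rightarrow> real \<Rightarrow> int \<Rightarrow> int \<Rightarrow> ereal" where
  "mu_term n \<xi> \<xi>' s t =
     (if \<bar>s - t * \<xi>\<bar> * \<bar>s - t * \<xi>'\<bar> = 0 then \<infinity>
      else ereal (real_of_int (gcd t (int n)) * \<bar>\<xi> - \<xi>'\<bar>
                  / (\<bar>s - t * \<xi>\<bar> * \<bar>s - t * \<xi>'\<bar>)))"

definition mu :: "nat \<Rightarrow> real \<Rightarrow> real \<Rightarrow> ereal" where
  "mu n \<xi> \<xi>' = (SUP st \<in> (UNIV :: (int \<times> int) set) - {(0, 0)}. mu_term n \<xi> \<xi>' (fst st) (snd st))"

definition M :: "nat \<Rightarrow> real set" where
  "M n = {\<alpha>. \<exists>\<xi> \<xi>'. \<xi> \<noteq> \<xi>' \<and> mu n \<xi> \<xi>' = ereal \<alpha>}"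

end

(* The term of mu_n(xi, xi') at (s, t) is gcd(t, n) / |Q(s, t)| for the binary quadratic form
   Q(s, t) = (s - t xi)(s - t xi') / |xi - xi'| of discriminant 1, so mu_n(xi, xi') <= alpha says
   gcd(t, n) <= alpha |Q(s, t)| at every nonzero integer point.  Take primitive points (s_k, t_k)
   at which this is nearly an equality, complete them to unimodular matrices and transform Q.
   The new forms have discriminant 1, leading coefficient Q(s_k, t_k) between 1/alpha and
   2n/alpha and, after a shear, a middle coefficient at most twice that, hence bounded
   coefficients; their weights are gcd(u x + v y, n) for the bottom row (u, v) of the matrix.
   Along a subsequence the rows are constant modulo n and the forms converge; the limit form
   still satisfies the (closed) weighted inequality and attains equality at (1, 0).  Moving the
   weight back to (0, 1) by a unimodular substitution gives a form whose roots realise alpha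
   with the supremum attained. *)
theory Submission
  imports Defs
begin

definition qf :: "real \<Rightarrow> real \<Rightarrow> real \<Rightarrow> real \<Rightarrow> real \<Rightarrow> real" where
  "qf a b c x y = a * x\<^sup>2 + b * x * y + c * y\<^sup>2"

definition qf_polar :: "real \<Rightarrow> real \<Rightarrow> real \<Rightarrow> real \<Rightarrow> real \<Rightarrow> real \<Rightarrow> real \<Rightarrow> real" where
  "qf_polar a b c s t p q = 2 * a * s * p + b * (s * q + t * p) + 2 * c * t * q"

lemma qf_subst:
  "qf a b c (s * x + p * y) (t * x + q * y) =
     qf (qf a b c s t) (qf_polar a b c s t p q) (qf a b c p q) x y"
  unfolding qf_def qf_polar_def by (simp add: power2_eq_square algebra_simps)

lemma qf_polar_disc:
  "(qf_polar a b c s t p q)\<^sup>2 - 4 * qf a b c s t * qf a b c p q = (b\<^sup>2 - 4 * a * c) * (s * q - t * p)\<^sup>2"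
  unfolding qf_def qf_polar_def by (simp add: power2_eq_square algebra_simps)

lemma qf_polar_shift:
  "qf_polar a b c s t (p + m * s) (q + m * t) = qf_polar a b c s t p q + 2 * m * qf a b c s t"
  unfolding qf_def qf_polar_def by (simp add: power2_eq_square algebra_simps)

lemma qf_scale: "qf a b c (g * x) (g * y) = g\<^sup>2 * qf a b c x y"
  unfolding qf_def by (simp add: power2_eq_square algebra_simps)

lemma qf_1_0 [simp]: "qf a b c 1 0 = a"
  unfolding qf_def by simp

lemma qf_roots:
  assumes "A \<noteq> 0" "B\<^sup>2 - 4 * A * C = 1"
  shows "qf A B C x y = A * ((x - y * ((1 - B) / (2 * A))) * (x - y * ((- 1 - B) / (2 * A))))"
proof -
  have C: "C = (B\<^sup>2 - 1) / (4 * A)" using assms by (simp add: field_simps)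
  show ?thesis unfolding qf_def C using assms(1) by (simp add: field_simps power2_eq_square)
qed

lemma coprime_of_det_eq_1:
  fixes s t p q :: int
  assumes "s * q - t * p = 1"
  shows "coprime t q"
proof (rule coprimeI)
  fix d assume "d dvd t" "d dvd q"
  then have "d dvd s * q - t * p" by (simp add: dvd_diff)
  then show "is_unit d" using assms by simp
qed

lemma gcd_mult_left_le:
  fixes g t m :: int
  assumes "g > 0"
  shows "gcd (g * t) m \<le> g * gcd t m"
proof (cases "gcd t m = 0")
  case False
  have "gcd (g * t) m dvd gcd (g * t) (g * m)" by (simp add: gcd_greatest)
  also have "\<dots> = g * gcd t m" using gcd_mult_distrib_int[of g t m] assms by simp
  finally show ?thesis using False assms
    by (intro zdvd_imp_le) (auto simp: order_le_neq_trans)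
qed simp

lemma gcd_cong_mod:
  fixes a b m :: int
  assumes "a mod m = b mod m"
  shows "gcd a m = gcd b m"
  using assms by (metis gcd_red_int)

lemma qf_unimodular_completion:
  fixes s t :: int
  assumes "coprime s t" "qf a b c s t \<noteq> 0"
  obtains p q :: int where "s * q - t * p = 1" "\<bar>qf_polar a b c s t p q\<bar> \<le> 2 * \<bar>qf a b c s t\<bar>"
proof -
  obtain i j where "i * s + j * t = 1"
    using bezout_int[of s t] assms(1) by auto
  define Q where "Q = qf a b c s t"
  define y where "y = qf_polar a b c s t (- j) i / (2 * Q)"
  define m where "m = \<lfloor>- y\<rfloor>"
  define p where "p = - j + m * s"
  define q where "q = i + m * t"
  have "s * q - t * p = 1"
    unfolding p_def q_def using \<open>i * s + j * t = 1\<close> by (simp add: algebra_simps)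
  moreover have "qf_polar a b c s t p q = 2 * Q * (y + m)"
    unfolding p_def q_def y_def Q_def using qf_polar_shift[of a b c s t "- j" m i] assms(2)
    by (simp add: field_simps)
  moreover have "\<bar>y + m\<bar> \<le> 1" unfolding m_def by linarith
  ultimately show ?thesis
    using that[of q p] unfolding Q_def by (simp add: abs_mult mult_left_le)
qed

text \<open>Passing to the primitive point \<open>(s, t) / g\<close>, \<open>g = gcd s t\<close>, divides the value of the
  form by \<open>g\<^sup>2\<close> but the weight by at most \<open>g\<close>.\<close>
lemma qf_weight_primitive:
  fixes s t :: int
  assumes "(s, t) \<noteq> (0, 0)" "\<beta> * \<bar>qf a b c s t\<bar> < of_int (gcd t m)"
  obtains s' t' where "coprime s' t'" "\<beta> * \<bar>qf a b c s' t'\<bar> < of_int (gcd t' m)"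
proof -
  define g where "g = gcd s t"
  have g: "g > 0" unfolding g_def using assms(1) by auto
  define s' where "s' = s div g"
  define t' where "t' = t div g"
  have st: "s = g * s'" "t = g * t'" unfolding s'_def t'_def g_def by simp_all
  have "coprime s' t'" unfolding s'_def t'_def g_def using assms(1) by (intro div_gcd_coprime) auto
  have "of_int g ^ 2 * (\<beta> * \<bar>qf a b c s' t'\<bar>) = \<beta> * \<bar>qf a b c s t\<bar>"
    unfolding st using qf_scale[of a b c g s' t'] by (simp add: abs_mult)
  also have "\<dots> < of_int (gcd t m)" by (fact assms(2))
  also have "\<dots> \<le> of_int g ^ 2 * of_int (gcd t' m)"
  proof -
    have "gcd t m \<le> g * gcd t' m" unfolding st using gcd_mult_left_le[OF g] .
    also have "\<dots> \<le> g ^ 2 * gcd t' m"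
      using g by (simp add: power2_eq_square mult_right_mono)
    finally show ?thesis by (metis of_int_le_iff of_int_mult of_int_power)
  qed
  finally have "\<beta> * \<bar>qf a b c s' t'\<bar> < of_int (gcd t' m)" using g by simp
  with \<open>coprime s' t'\<close> show ?thesis using that by blast
qed

text \<open>The definition of \<open>\<mu>\<^sub>n\<close> corresponds to the weight vector \<open>(u, v) = (0, 1)\<close>; general
  weight vectors are needed because unimodular substitutions move them.\<close>
definition weighted_bound :: "nat \<Rightarrow> real \<Rightarrow> real \<Rightarrow> real \<Rightarrow> real \<Rightarrow> int \<Rightarrow> int \<Rightarrow> bool" where
  "weighted_bound n \<alpha> a b c u v \<longleftrightarrow>
     (\<forall>x y. (x, y) \<noteq> (0, 0) \<longrightarrow>
        of_int (gcd (u * x + v * y) (int n)) \<le> \<alpha> * \<bar>qf a b c (of_int x) (of_int y)\<bar>)"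

lemma weighted_bound_one_le:
  assumes "weighted_bound n \<alpha> a b c u v" "n > 0" "(x, y) \<noteq> (0, 0)"
  shows "1 \<le> \<alpha> * \<bar>qf a b c (of_int x) (of_int y)\<bar>"
proof -
  have "(1 :: real) \<le> of_int (gcd (u * x + v * y) (int n))"
    using assms(2) by (simp add: int_one_le_iff_zero_less)
  also have "\<dots> \<le> \<alpha> * \<bar>qf a b c (of_int x) (of_int y)\<bar>"
    using assms(1,3) unfolding weighted_bound_def by blast
  finally show ?thesis .
qed

lemma weighted_bound_pos:
  assumes "weighted_bound n \<alpha> a b c u v" "n > 0"
  shows "\<alpha> > 0"
proof -
  have "0 < \<alpha> * \<bar>qf a b c 1 0\<bar>" using weighted_bound_one_le[OF assms, of 1 0] by simp
  then show ?thesis by (simp add: zero_less_mult_iff)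
qed

lemma weighted_bound_subst:
  fixes s t p q :: int
  assumes "weighted_bound n \<alpha> a b c u v" "s * q - t * p = 1"
  shows "weighted_bound n \<alpha> (qf a b c s t) (qf_polar a b c s t p q) (qf a b c p q)
           (u * s + v * t) (u * p + v * q)"
  unfolding weighted_bound_def
proof (intro allI impI)
  fix x y :: int
  assume xy: "(x, y) \<noteq> (0, 0)"
  have "q * (s * x + p * y) - p * (t * x + q * y) = (s * q - t * p) * x"
    and "s * (t * x + q * y) - t * (s * x + p * y) = (s * q - t * p) * y"
    by (simp_all add: algebra_simps)
  with xy assms(2) have "(s * x + p * y, t * x + q * y) \<noteq> (0, 0)" by auto
  then have "of_int (gcd (u * (s * x + p * y) + v * (t * x + q * y)) (int n))
      \<le> \<alpha> * \<bar>qf a b c (of_int (s * x + p * y)) (of_int (t * x + q * y))\<bar>"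
    using assms(1) unfolding weighted_bound_def by blast
  moreover have "u * (s * x + p * y) + v * (t * x + q * y) = (u * s + v * t) * x + (u * p + v * q) * y"
    by (simp add: algebra_simps)
  ultimately show "of_int (gcd ((u * s + v * t) * x + (u * p + v * q) * y) (int n))
      \<le> \<alpha> * \<bar>qf (qf a b c s t) (qf_polar a b c s t p q) (qf a b c p q) (of_int x) (of_int y)\<bar>"
    by (simp add: qf_subst)
qed

lemma weighted_bound_cong_mod:
  assumes "u mod int n = u' mod int n" "v mod int n = v' mod int n"
  shows "weighted_bound n \<alpha> a b c u v \<longleftrightarrow> weighted_bound n \<alpha> a b c u' v'"
proof -
  have "gcd (u * x + v * y) (int n) = gcd (u' * x + v' * y) (int n)" for x y
  proof -
    have "(u * x + v * y) mod int n = (u' * x + v' * y) mod int n"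
      using assms by (intro mod_add_cong mod_mult_cong) auto
    then show ?thesis by (rule gcd_cong_mod)
  qed
  then show ?thesis unfolding weighted_bound_def by simp
qed

lemma weighted_bound_limit:
  assumes "\<And>k. weighted_bound n \<alpha> (a k) (b k) (c k) u v"
    and "a \<longlonglongrightarrow> A" "b \<longlonglongrightarrow> B" "c \<longlonglongrightarrow> C"
  shows "weighted_bound n \<alpha> A B C u v"
  unfolding weighted_bound_def
proof (intro allI impI)
  fix x y :: int
  assume "(x, y) \<noteq> (0, 0)"
  then have "\<forall>k. of_int (gcd (u * x + v * y) (int n)) \<le> \<alpha> * \<bar>qf (a k) (b k) (c k) (of_int x) (of_int y)\<bar>"
    using assms(1) unfolding weighted_bound_def by blast
  moreover have "(\<lambda>k. \<alpha> * \<bar>qf (a k) (b k) (c k) (of_int x) (of_int y)\<bar>) \<longlonglongrightarrow> \<alpha> * \<bar>qf A B C (of_int x) (of_int y)\<bar>"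
    unfolding qf_def by (intro tendsto_intros assms(2-4))
  ultimately show "of_int (gcd (u * x + v * y) (int n)) \<le> \<alpha> * \<bar>qf A B C (of_int x) (of_int y)\<bar>"
    by (intro LIMSEQ_le_const) auto
qed

lemma weighted_bound_normalize_weight:
  assumes "weighted_bound n \<alpha> a b c u v" "coprime u v"
  obtains A B C s where "weighted_bound n \<alpha> A B C 0 1" "B\<^sup>2 - 4 * A * C = b\<^sup>2 - 4 * a * c"
    "qf A B C (of_int s) (of_int u) = a" "(s, u) \<noteq> (0, 0)"
proof -
  obtain i j where "i * u + j * v = 1"
    using bezout_int[of u v] assms(2) by auto
  then have det: "v * j - (- u) * i = 1" by (simp add: algebra_simps)
  define A where "A = qf a b c v (- u)"
  define B where "B = qf_polar a b c v (- u) i j"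
  define C where "C = qf a b c i j"
  have "weighted_bound n \<alpha> A B C (u * v + v * - u) (u * i + v * j)"
    unfolding A_def B_def C_def using weighted_bound_subst[OF assms(1) det] by simp
  moreover have "u * v + v * - u = 0" "u * i + v * j = 1" using det by (simp_all add: algebra_simps)
  ultimately have "weighted_bound n \<alpha> A B C 0 1" by simp
  moreover have "B\<^sup>2 - 4 * A * C = b\<^sup>2 - 4 * a * c"
  proof -
    have "real_of_int v * of_int j - of_int (- u) * of_int i = 1"
      using det by (metis of_int_1 of_int_diff of_int_mult)
    then show ?thesis unfolding A_def B_def C_def qf_polar_disc by simp
  qed
  moreover have "qf A B C (of_int j) (of_int u) = a"
  proof -
    have "qf A B C (of_int j) (of_int u) = qf a b c (of_int (v * j + i * u)) (of_int (- u * j + j * u))"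
      unfolding A_def B_def C_def qf_subst [symmetric] by (simp add: algebra_simps)
    also have "\<dots> = a" using det by (simp add: algebra_simps)
    finally show ?thesis .
  qed
  moreover have "(j, u) \<noteq> (0, 0)" using det by auto
  ultimately show ?thesis using that by blast
qed

lemma weighted_bound_near_extremal:
  fixes s t :: int
  assumes "weighted_bound n \<alpha> a b c 0 1" "n > 0" "coprime s t"
    and "\<beta> * \<bar>qf a b c s t\<bar> < of_int (gcd t (int n))"
  obtains a' b' c' u v where "weighted_bound n \<alpha> a' b' c' u v" "coprime u v"
    "b'\<^sup>2 - 4 * a' * c' = b\<^sup>2 - 4 * a * c" "\<beta> * \<bar>a'\<bar> < of_int (gcd u (int n))" "\<bar>b'\<bar> \<le> 2 * \<bar>a'\<bar>"
proof -
  have "(s, t) \<noteq> (0, 0)" using assms(3) by auto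
  then have "1 \<le> \<alpha> * \<bar>qf a b c s t\<bar>" by (rule weighted_bound_one_le[OF assms(1,2)])
  then have "qf a b c s t \<noteq> 0" by auto
  then obtain p q where det: "s * q - t * p = 1" and polar: "\<bar>qf_polar a b c s t p q\<bar> \<le> 2 * \<bar>qf a b c s t\<bar>"
    by (rule qf_unimodular_completion[OF assms(3)])
  have "weighted_bound n \<alpha> (qf a b c s t) (qf_polar a b c s t p q) (qf a b c p q) t q"
    using weighted_bound_subst[OF assms(1) det] by simp
  moreover have "(qf_polar a b c s t p q)\<^sup>2 - 4 * qf a b c s t * qf a b c p q = b\<^sup>2 - 4 * a * c"
  proof -
    have "real_of_int s * of_int q - of_int t * of_int p = 1"
      using det by (metis of_int_1 of_int_diff of_int_mult)
    then show ?thesis unfolding qf_polar_disc by simp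
  qed
  ultimately show ?thesis
    using that[OF _ coprime_of_det_eq_1[OF det]] assms(4) polar by simp
qed

lemma convergent_subseq_constant_finite:
  fixes X :: "nat \<Rightarrow> 'a::heine_borel" and f :: "nat \<Rightarrow> 'b"
  assumes "bounded (range X)" "finite (range f)"
  obtains \<phi> l where "strict_mono \<phi>" "\<And>k. f (\<phi> k) = f (\<phi> 0)" "(X \<circ> \<phi>) \<longlonglongrightarrow> l"
proof -
  obtain k1 where "infinite {k \<in> UNIV. f k = f k1}"
    using pigeonhole_infinite[OF infinite_UNIV_nat assms(2)] by blast
  then obtain r :: "nat \<Rightarrow> nat" where r: "strict_mono r" and "\<forall>k. r k \<in> {k \<in> UNIV. f k = f k1}"
    using infinite_enumerate by blast
  then have fr: "f (r k) = f k1" for k by simp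
  have "bounded (range (X \<circ> r))" using assms(1) by (rule bounded_subset) auto
  then obtain l \<sigma> where "strict_mono \<sigma>" "(X \<circ> r \<circ> \<sigma>) \<longlonglongrightarrow> l"
    using bounded_imp_convergent_subsequence by blast
  then show ?thesis using that[of "r \<circ> \<sigma>" l] r fr by (simp add: strict_mono_o o_assoc)
qed

lemma disc_one_coeff_bound:
  fixes a b c \<alpha> H :: real
  assumes "b\<^sup>2 - 4 * a * c = 1" "\<bar>b\<bar> \<le> 2 * \<bar>a\<bar>" "1 \<le> \<alpha> * \<bar>a\<bar>" "\<bar>a\<bar> \<le> H"
  shows "4 * \<bar>c\<bar> \<le> \<alpha> * (4 * H\<^sup>2 + 1)"
proof -
  have "0 < \<alpha> * \<bar>a\<bar>" using assms(3) by linarith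
  then have "\<alpha> > 0" by (simp add: zero_less_mult_iff)
  have "b\<^sup>2 \<le> (2 * \<bar>a\<bar>)\<^sup>2" using assms(2) by (metis abs_ge_zero power2_abs power_mono)
  also have "\<dots> \<le> (2 * H)\<^sup>2" using assms(4) by (intro power_mono) auto
  also have "\<dots> = 4 * H\<^sup>2" by (simp add: power_mult_distrib)
  moreover have "4 * \<bar>a\<bar> * \<bar>c\<bar> = \<bar>b\<^sup>2 - 1\<bar>"
    using assms(1) by (simp add: abs_mult algebra_simps)
  ultimately have "4 * \<bar>a\<bar> * \<bar>c\<bar> \<le> 4 * H\<^sup>2 + 1"
    using zero_le_power2[of b] by linarith
  then have "\<alpha> * (4 * \<bar>a\<bar> * \<bar>c\<bar>) \<le> \<alpha> * (4 * H\<^sup>2 + 1)" using \<open>\<alpha> > 0\<close> by simp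
  moreover have "1 * (4 * \<bar>c\<bar>) \<le> (\<alpha> * \<bar>a\<bar>) * (4 * \<bar>c\<bar>)"
    using assms(3) by (rule mult_right_mono) simp
  ultimately show ?thesis by linarith
qed

lemma near_extremal_forms_bounded:
  fixes a b c \<epsilon> :: "nat \<Rightarrow> real" and u v :: "nat \<Rightarrow> int"
  assumes n: "n > 0"
    and bound: "\<And>k. weighted_bound n \<alpha> (a k) (b k) (c k) (u k) (v k)"
    and disc: "\<And>k. (b k)\<^sup>2 - 4 * a k * c k = 1"
    and reduced: "\<And>k. \<bar>b k\<bar> \<le> 2 * \<bar>a k\<bar>"
    and near: "\<And>k. (\<alpha> - \<epsilon> k) * \<bar>a k\<bar> < of_int (gcd (u k) (int n))"
    and eps: "\<And>k. \<epsilon> k \<le> \<alpha> / 2"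
  shows "bounded (range (\<lambda>k. (a k, b k, c k)))"
proof -
  have one_le: "1 \<le> \<alpha> * \<bar>a k\<bar>" for k
    using weighted_bound_one_le[OF bound n, of 1 0] by simp
  have "\<alpha> > 0" using weighted_bound_pos[OF bound n] .
  \<comment> \<open>The weight never exceeds \<open>n\<close>, so near-extremality bounds the leading coefficient.\<close>
  define H where "H = 2 * real n / \<alpha>"
  have a_le: "\<bar>a k\<bar> \<le> H" for k
  proof -
    have "\<alpha> / 2 * \<bar>a k\<bar> \<le> (\<alpha> - \<epsilon> k) * \<bar>a k\<bar>" using eps[of k] by (intro mult_right_mono) auto
    also have "\<dots> < of_int (gcd (u k) (int n))" by (fact near)
    also have "\<dots> \<le> real n" using n by (metis gcd_le2_int of_int_le_iff of_int_of_nat_eq of_nat_0_less_iff)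
    finally show ?thesis unfolding H_def using \<open>\<alpha> > 0\<close> by (simp add: field_simps)
  qed
  have "bounded (range a)" using a_le by (intro boundedI[where B = H]) auto
  moreover have "bounded (range b)"
  proof (rule boundedI)
    fix x assume "x \<in> range b"
    then obtain k where "x = b k" by blast
    then show "norm x \<le> 2 * H" using reduced[of k] a_le[of k] by simp
  qed
  moreover have "bounded (range c)"
  proof (rule boundedI)
    fix x assume "x \<in> range c"
    then obtain k where "x = c k" by blast
    then show "norm x \<le> \<alpha> * (4 * H\<^sup>2 + 1)"
      using disc_one_coeff_bound[OF disc reduced one_le a_le, of k] by simp
  qed
  ultimately have "bounded (range a \<times> range b \<times> range c)" by (intro bounded_Times)
  then show ?thesis by (rule bounded_subset) auto
qed

lemma weighted_bound_extremal_limit: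
  fixes a b c \<epsilon> :: "nat \<Rightarrow> real" and u v :: "nat \<Rightarrow> int"
  assumes n: "n > 0" and bounded: "bounded (range (\<lambda>k. (a k, b k, c k)))"
    and bound: "\<And>k. weighted_bound n \<alpha> (a k) (b k) (c k) (u k) (v k)"
    and coprime_uv: "\<And>k. coprime (u k) (v k)"
    and disc: "\<And>k. (b k)\<^sup>2 - 4 * a k * c k = 1"
    and near: "\<And>k. (\<alpha> - \<epsilon> k) * \<bar>a k\<bar> < of_int (gcd (u k) (int n))"
    and eps: "\<epsilon> \<longlonglongrightarrow> 0"
  obtains A B C u\<^sub>0 v\<^sub>0 where "weighted_bound n \<alpha> A B C u\<^sub>0 v\<^sub>0" "coprime u\<^sub>0 v\<^sub>0"
    "B\<^sup>2 - 4 * A * C = 1" "of_int (gcd u\<^sub>0 (int n)) = \<alpha> * \<bar>A\<bar>"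
proof -
  have "finite (range (\<lambda>k. (u k mod int n, v k mod int n)))"
    by (rule finite_subset[of _ "{0..<int n} \<times> {0..<int n}"]) (use n in auto)
  then obtain \<phi> l where \<phi>: "strict_mono \<phi>"
    and mods: "\<And>k. (u (\<phi> k) mod int n, v (\<phi> k) mod int n) = (u (\<phi> 0) mod int n, v (\<phi> 0) mod int n)"
    and lim: "((\<lambda>k. (a k, b k, c k)) \<circ> \<phi>) \<longlonglongrightarrow> l"
    using convergent_subseq_constant_finite
        [OF bounded, of "\<lambda>k. (u k mod int n, v k mod int n)"] by blast
  obtain A B C where l: "l = (A, B, C)" by (metis prod_cases3)
  have la: "(\<lambda>k. a (\<phi> k)) \<longlonglongrightarrow> A" and lb: "(\<lambda>k. b (\<phi> k)) \<longlonglongrightarrow> B" and lc: "(\<lambda>k. c (\<phi> k)) \<longlonglongrightarrow> C"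
    using tendsto_fst[OF lim] tendsto_fst[OF tendsto_snd[OF lim]] tendsto_snd[OF tendsto_snd[OF lim]]
    by (simp_all add: comp_def l)
  define u\<^sub>0 where "u\<^sub>0 = u (\<phi> 0)"
  define v\<^sub>0 where "v\<^sub>0 = v (\<phi> 0)"
  have "weighted_bound n \<alpha> (a (\<phi> k)) (b (\<phi> k)) (c (\<phi> k)) u\<^sub>0 v\<^sub>0" for k
    using bound weighted_bound_cong_mod mods unfolding u\<^sub>0_def v\<^sub>0_def by blast
  then have wb: "weighted_bound n \<alpha> A B C u\<^sub>0 v\<^sub>0" using la lb lc by (rule weighted_bound_limit)
  have "(\<lambda>k. (b (\<phi> k))\<^sup>2 - 4 * a (\<phi> k) * c (\<phi> k)) \<longlonglongrightarrow> B\<^sup>2 - 4 * A * C"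
    by (intro tendsto_intros la lb lc)
  then have "B\<^sup>2 - 4 * A * C = 1" unfolding disc by (simp add: LIMSEQ_const_iff)
  define g :: real where "g = of_int (gcd u\<^sub>0 (int n))"
  have "g \<le> \<alpha> * \<bar>A\<bar>"
    using wb[unfolded weighted_bound_def, rule_format, of 1 0] unfolding g_def by simp
  moreover have "\<alpha> * \<bar>A\<bar> \<le> g"
  proof (rule LIMSEQ_le_const2)
    have "(\<lambda>k. \<epsilon> (\<phi> k)) \<longlonglongrightarrow> 0" using LIMSEQ_subseq_LIMSEQ[OF eps \<phi>] by (simp add: comp_def)
    then show "(\<lambda>k. (\<alpha> - \<epsilon> (\<phi> k)) * \<bar>a (\<phi> k)\<bar>) \<longlonglongrightarrow> \<alpha> * \<bar>A\<bar>"
      using la by (auto intro!: tendsto_eq_intros)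
    show "\<exists>N. \<forall>k\<ge>N. (\<alpha> - \<epsilon> (\<phi> k)) * \<bar>a (\<phi> k)\<bar> \<le> g"
      using near mods gcd_cong_mod unfolding g_def u\<^sub>0_def v\<^sub>0_def by (metis less_imp_le prod.inject)
  qed
  ultimately have "g = \<alpha> * \<bar>A\<bar>" by (rule antisym)
  moreover have "coprime u\<^sub>0 v\<^sub>0" unfolding u\<^sub>0_def v\<^sub>0_def by (rule coprime_uv)
  ultimately show ?thesis
    using that wb \<open>B\<^sup>2 - 4 * A * C = 1\<close> unfolding g_def by blast
qed

lemma weighted_bound_extremal_form:
  assumes n: "n > 0" and bound: "weighted_bound n \<alpha> a b c 0 1" and disc: "b\<^sup>2 - 4 * a * c = 1"
    and approx: "\<And>\<epsilon>. \<epsilon> > 0 \<Longrightarrow> \<exists>s t. (s, t) \<noteq> (0, 0) \<and>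
                   (\<alpha> - \<epsilon>) * \<bar>qf a b c (of_int s) (of_int t)\<bar> < of_int (gcd t (int n))"
  obtains A B C s\<^sub>0 t\<^sub>0 where "weighted_bound n \<alpha> A B C 0 1" "B\<^sup>2 - 4 * A * C = 1" "(s\<^sub>0, t\<^sub>0) \<noteq> (0, 0)"
    "of_int (gcd t\<^sub>0 (int n)) = \<alpha> * \<bar>qf A B C (of_int s\<^sub>0) (of_int t\<^sub>0)\<bar>"
proof -
  have "\<alpha> > 0" using weighted_bound_pos[OF bound n] .
  define \<epsilon> where "\<epsilon> k = \<alpha> / 2 * inverse (real (Suc k))" for k
  have "\<epsilon> \<longlonglongrightarrow> 0"
    unfolding \<epsilon>_def by (intro tendsto_mult_right_zero LIMSEQ_inverse_real_of_nat)
  have \<epsilon>_le: "\<epsilon> k \<le> \<alpha> / 2" for k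
    unfolding \<epsilon>_def using \<open>\<alpha> > 0\<close> by (simp add: field_simps)
  have "\<exists>a' b' c' u v. weighted_bound n \<alpha> a' b' c' u v \<and> coprime u v \<and> b'\<^sup>2 - 4 * a' * c' = 1 \<and>
          (\<alpha> - \<epsilon> k) * \<bar>a'\<bar> < of_int (gcd u (int n)) \<and> \<bar>b'\<bar> \<le> 2 * \<bar>a'\<bar>" for k
  proof -
    have "\<epsilon> k > 0" unfolding \<epsilon>_def using \<open>\<alpha> > 0\<close> by simp
    then obtain s t where "(s, t) \<noteq> (0, 0)"
      "(\<alpha> - \<epsilon> k) * \<bar>qf a b c (of_int s) (of_int t)\<bar> < of_int (gcd t (int n))"
      using approx by blast
    then obtain s' t' where "coprime s' t'"
      "(\<alpha> - \<epsilon> k) * \<bar>qf a b c (of_int s') (of_int t')\<bar> < of_int (gcd t' (int n))"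
      by (rule qf_weight_primitive)
    then obtain a' b' c' u v where "weighted_bound n \<alpha> a' b' c' u v" "coprime u v"
      "b'\<^sup>2 - 4 * a' * c' = b\<^sup>2 - 4 * a * c" "(\<alpha> - \<epsilon> k) * \<bar>a'\<bar> < of_int (gcd u (int n))" "\<bar>b'\<bar> \<le> 2 * \<bar>a'\<bar>"
      by (rule weighted_bound_near_extremal[OF bound n])
    then show ?thesis using disc by metis
  qed
  then obtain a' b' c' u v where seq: "\<And>k. weighted_bound n \<alpha> (a' k) (b' k) (c' k) (u k) (v k)"
    "\<And>k. coprime (u k) (v k)" "\<And>k. (b' k)\<^sup>2 - 4 * a' k * c' k = 1"
    "\<And>k. (\<alpha> - \<epsilon> k) * \<bar>a' k\<bar> < of_int (gcd (u k) (int n))" "\<And>k. \<bar>b' k\<bar> \<le> 2 * \<bar>a' k\<bar>"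
    by metis
  obtain A B C u\<^sub>0 v\<^sub>0 where "weighted_bound n \<alpha> A B C u\<^sub>0 v\<^sub>0" "coprime u\<^sub>0 v\<^sub>0"
    "B\<^sup>2 - 4 * A * C = 1" and extremal: "of_int (gcd u\<^sub>0 (int n)) = \<alpha> * \<bar>A\<bar>"
    using weighted_bound_extremal_limit[OF n near_extremal_forms_bounded[OF n seq(1,3,5,4) \<epsilon>_le]
        seq(1-4) \<open>\<epsilon> \<longlonglongrightarrow> 0\<close>] by blast
  then obtain A' B' C' s where "weighted_bound n \<alpha> A' B' C' 0 1" "B'\<^sup>2 - 4 * A' * C' = 1"
    "qf A' B' C' (of_int s) (of_int u\<^sub>0) = A" "(s, u\<^sub>0) \<noteq> (0, 0)"
    by (metis weighted_bound_normalize_weight)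
  with extremal show ?thesis using that by metis
qed

text \<open>\<open>\<xi>, \<xi>'\<close> are the roots of the form normalised to discriminant 1, i.e. up to sign
  \<open>Q(x, y) = (x - y \<xi>) (x - y \<xi>') / \<bar>\<xi> - \<xi>'\<bar>\<close>; then the term of \<open>\<mu>\<^sub>n\<close> at \<open>(s, t)\<close> is
  \<open>gcd t n / \<bar>Q(s, t)\<bar>\<close>.\<close>
definition qf_has_roots :: "real \<Rightarrow> real \<Rightarrow> real \<Rightarrow> real \<Rightarrow> real \<Rightarrow> bool" where
  "qf_has_roots a b c \<xi> \<xi>' \<longleftrightarrow> \<xi> \<noteq> \<xi>' \<and>
     (\<forall>x y. \<bar>qf a b c x y\<bar> * \<bar>\<xi> - \<xi>'\<bar> = \<bar>x - y * \<xi>\<bar> * \<bar>x - y * \<xi>'\<bar>)"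

lemma qf_has_roots_monic:
  assumes "\<xi> \<noteq> \<xi>'"
  defines "D \<equiv> \<bar>\<xi> - \<xi>'\<bar>"
  shows "qf_has_roots (1 / D) (- (\<xi> + \<xi>') / D) (\<xi> * \<xi>' / D) \<xi> \<xi>'"
    and "(- (\<xi> + \<xi>') / D)\<^sup>2 - 4 * (1 / D) * (\<xi> * \<xi>' / D) = 1"
proof -
  have "D \<noteq> 0" unfolding D_def using assms(1) by simp
  have "qf (1 / D) (- (\<xi> + \<xi>') / D) (\<xi> * \<xi>' / D) x y = (x - y * \<xi>) * (x - y * \<xi>') / D" for x y
    unfolding qf_def using \<open>D \<noteq> 0\<close> by (simp add: field_simps power2_eq_square)
  then show "qf_has_roots (1 / D) (- (\<xi> + \<xi>') / D) (\<xi> * \<xi>' / D) \<xi> \<xi>'"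
    unfolding qf_has_roots_def D_def using assms(1) by (simp add: abs_mult)
  have "D\<^sup>2 = (\<xi> + \<xi>')\<^sup>2 - 4 * \<xi> * \<xi>'" unfolding D_def by (simp add: power2_eq_square algebra_simps)
  have "(- (\<xi> + \<xi>') / D)\<^sup>2 - 4 * (1 / D) * (\<xi> * \<xi>' / D) = ((\<xi> + \<xi>')\<^sup>2 - 4 * \<xi> * \<xi>') / D\<^sup>2"
    using \<open>D \<noteq> 0\<close> by (simp add: field_simps power2_eq_square)
  also have "\<dots> = D\<^sup>2 / D\<^sup>2" using \<open>D\<^sup>2 = _\<close> by simp
  also have "\<dots> = 1" using \<open>D \<noteq> 0\<close> by simp
  finally show "(- (\<xi> + \<xi>') / D)\<^sup>2 - 4 * (1 / D) * (\<xi> * \<xi>' / D) = 1" .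
qed

lemma qf_has_roots_disc_one:
  assumes "A \<noteq> 0" "B\<^sup>2 - 4 * A * C = 1"
  shows "qf_has_roots A B C ((1 - B) / (2 * A)) ((- 1 - B) / (2 * A))"
proof -
  have diff: "(1 - B) / (2 * A) - (- 1 - B) / (2 * A) = 1 / A"
    using assms(1) by (simp add: field_simps)
  show ?thesis
    unfolding qf_has_roots_def diff qf_roots[OF assms] using assms(1)
    by (simp add: abs_mult)
qed

lemma mu_term_qf:
  assumes "qf_has_roots a b c \<xi> \<xi>'"
  shows "mu_term n \<xi> \<xi>' s t =
    (if qf a b c (of_int s) (of_int t) = 0 then \<infinity>
     else ereal (of_int (gcd t (int n)) / \<bar>qf a b c (of_int s) (of_int t)\<bar>))"
proof -
  define Q where "Q = qf a b c (of_int s) (of_int t)"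
  have "\<bar>\<xi> - \<xi>'\<bar> > 0" and prod: "\<bar>of_int s - of_int t * \<xi>\<bar> * \<bar>of_int s - of_int t * \<xi>'\<bar> = \<bar>Q\<bar> * \<bar>\<xi> - \<xi>'\<bar>"
    using assms unfolding qf_has_roots_def Q_def by auto
  then show ?thesis unfolding mu_term_def prod Q_def [symmetric] by simp
qed

lemma mu_term_le_iff:
  assumes "qf_has_roots a b c \<xi> \<xi>'" "n > 0"
  shows "mu_term n \<xi> \<xi>' s t \<le> ereal \<alpha> \<longleftrightarrow>
    of_int (gcd t (int n)) \<le> \<alpha> * \<bar>qf a b c (of_int s) (of_int t)\<bar>"
proof -
  have "0 < gcd t (int n)" using assms(2) by simp
  then show ?thesis unfolding mu_term_qf[OF assms(1)]
    by (auto simp: pos_divide_le_eq mult.commute not_le)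
qed

lemma less_mu_term_iff:
  assumes "qf_has_roots a b c \<xi> \<xi>'"
  shows "ereal \<beta> < mu_term n \<xi> \<xi>' s t \<longleftrightarrow> qf a b c (of_int s) (of_int t) = 0 \<or>
    \<beta> * \<bar>qf a b c (of_int s) (of_int t)\<bar> < of_int (gcd t (int n))"
  unfolding mu_term_qf[OF assms] by (auto simp: pos_less_divide_eq)

lemma mu_term_eq_iff:
  assumes "qf_has_roots a b c \<xi> \<xi>'"
  shows "mu_term n \<xi> \<xi>' s t = ereal \<alpha> \<longleftrightarrow> qf a b c (of_int s) (of_int t) \<noteq> 0 \<and>
    of_int (gcd t (int n)) = \<alpha> * \<bar>qf a b c (of_int s) (of_int t)\<bar>"
  unfolding mu_term_qf[OF assms] by (auto simp: divide_eq_eq mult.commute)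

lemma mu_le_iff_weighted_bound:
  assumes "qf_has_roots a b c \<xi> \<xi>'" "n > 0"
  shows "mu n \<xi> \<xi>' \<le> ereal \<alpha> \<longleftrightarrow> weighted_bound n \<alpha> a b c 0 1"
  unfolding mu_def weighted_bound_def SUP_le_iff mu_term_le_iff[OF assms]
  by (simp add: Ball_def split_paired_All)

lemma mu_eq_imp_near_extremal:
  assumes "qf_has_roots a b c \<xi> \<xi>'" "n > 0" "mu n \<xi> \<xi>' = ereal \<alpha>" "\<epsilon> > 0"
  shows "\<exists>s t. (s, t) \<noteq> (0, 0) \<and>
    (\<alpha> - \<epsilon>) * \<bar>qf a b c (of_int s) (of_int t)\<bar> < of_int (gcd t (int n))"
proof -
  have bound: "weighted_bound n \<alpha> a b c 0 1"
    using mu_le_iff_weighted_bound[OF assms(1,2), of \<alpha>] assms(3) by simp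
  have "ereal (\<alpha> - \<epsilon>) < mu n \<xi> \<xi>'" using assms(3,4) by simp
  then obtain s t where "(s, t) \<noteq> (0, 0)" "ereal (\<alpha> - \<epsilon>) < mu_term n \<xi> \<xi>' s t"
    unfolding mu_def less_SUP_iff Bex_def split_paired_Ex by auto
  moreover have "qf a b c (of_int s) (of_int t) \<noteq> 0"
    using weighted_bound_one_le[OF bound assms(2) \<open>(s, t) \<noteq> (0, 0)\<close>] by auto
  ultimately show ?thesis unfolding less_mu_term_iff[OF assms(1)] by blast
qed

lemma mu_attained_of_extremal_form:
  assumes "n > 0" "weighted_bound n \<alpha> A B C 0 1" "B\<^sup>2 - 4 * A * C = 1" "(s\<^sub>0, t\<^sub>0) \<noteq> (0, 0)"
    and extremal: "of_int (gcd t\<^sub>0 (int n)) = \<alpha> * \<bar>qf A B C (of_int s\<^sub>0) (of_int t\<^sub>0)\<bar>"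
  shows "\<exists>\<xi> \<xi>'. \<xi> \<noteq> \<xi>' \<and> mu n \<xi> \<xi>' = ereal \<alpha> \<and>
           (\<exists>s t. (s, t) \<noteq> (0, 0) \<and> mu_term n \<xi> \<xi>' s t = mu n \<xi> \<xi>')"
proof -
  have "A \<noteq> 0" using weighted_bound_one_le[OF assms(2,1), of 1 0] by auto
  define e e' where "e = (1 - B) / (2 * A)" and "e' = (- 1 - B) / (2 * A)"
  have roots: "qf_has_roots A B C e e'"
    unfolding e_def e'_def using qf_has_roots_disc_one[OF \<open>A \<noteq> 0\<close> assms(3)] .
  have attained: "mu_term n e e' s\<^sub>0 t\<^sub>0 = ereal \<alpha>"
    using mu_term_eq_iff[OF roots] extremal weighted_bound_one_le[OF assms(2,1,4)] by auto
  have "mu n e e' = ereal \<alpha>"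
  proof (rule antisym)
    show "mu n e e' \<le> ereal \<alpha>" using mu_le_iff_weighted_bound[OF roots assms(1)] assms(2) by simp
    show "ereal \<alpha> \<le> mu n e e'"
      unfolding mu_def using assms(4) attained by (intro SUP_upper2[of "(s\<^sub>0, t\<^sub>0)"]) auto
  qed
  moreover have "e \<noteq> e'" using roots unfolding qf_has_roots_def by blast
  ultimately show ?thesis using attained assms(4) by metis
qed

theorem proposition3p5:
  fixes n :: nat and \<alpha> :: real
  assumes "n > 0" and "\<alpha> \<in> M n"
  shows "\<exists>\<xi> \<xi>'. \<xi> \<noteq> \<xi>' \<and> mu n \<xi> \<xi>' = ereal \<alpha> \<and>
           (\<exists>s t. (s, t) \<noteq> (0, 0) \<and> mu_term n \<xi> \<xi>' s t = mu n \<xi> \<xi>')"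
proof -
  obtain x x' where "x \<noteq> x'" and mu_x: "mu n x x' = ereal \<alpha>"
    using assms(2) unfolding M_def by blast
  define D where "D = \<bar>x - x'\<bar>"
  note roots = qf_has_roots_monic[OF \<open>x \<noteq> x'\<close>, folded D_def]
  have "weighted_bound n \<alpha> (1 / D) (- (x + x') / D) (x * x' / D) 0 1"
    using mu_le_iff_weighted_bound[OF roots(1) assms(1), of \<alpha>] mu_x by simp
  from weighted_bound_extremal_form[OF assms(1) this roots(2)
      mu_eq_imp_near_extremal[OF roots(1) assms(1) mu_x]]
  show ?thesis using mu_attained_of_extremal_form[OF assms(1)] by metis
qed

end
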